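(* Suppose that $n=2^i(2k+1)$, where $i\ge 1$ and $k\ge 0$ are integers. Then: (1) if $i=1$, then $(n-1)!!\equiv 2k+1 \pmod n$; (2) if $i=2$, then $(n-1)!!\equiv -(2k+1)^2 \pmod n$; (3) if $i>2$, then $(n-1)!!\equiv (2k+1)^{2^{i-2}} \pmod n$.
   Context: For a natural number $m$, the double factorial $m!!$ is the product of the natural numbers less than or equal to $m$ that have the same parity as $m$; thus for even $n$, $(n-1)!!$ is the product of all odd natural numbers less than $n$. *)

theory Defs
  imports Main "HOL-Number_Theory.Cong"
begin

definition dfact :: "nat \<Rightarrow> nat" where
  "dfact m = (\<Prod>j\<in>{j\<in>{1..m}. even j = even m}. j)"

end

theory Submission
  imports Defs
begin

text \<open>
Write \<open>n = 2L m\<close> with \<open>L = 2^(i-1)\<close> and \<open>m = 2k+1\<close>. Then \<open>(n-1)!!\<close> is the product of the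
first \<open>L m\<close> odd numbers; it is divisible by \<open>m\<close>, and since the odd numbers are periodic
modulo \<open>2L = 2^i\<close> it is congruent to \<open>P^m\<close> modulo \<open>2^i\<close>, where \<open>P\<close> is the product of the first
\<open>L\<close> odd numbers. By the Chinese remainder theorem it remains to compare \<open>P^m\<close> with the
claimed value modulo \<open>2^i\<close>. For \<open>i > 2\<close>, pairing
\<open>t\<close> with \<open>4L - t\<close> gives \<open>P(2L) \<equiv> P(L)^2 (mod 4L)\<close>, and repeated squaring shows that both
\<open>P\<close> and every \<open>m^(2^(i-2))\<close> are \<open>1\<close> modulo \<open>2^i\<close>.
\<close>

definition odd_prod :: "nat \<Rightarrow> int" where
  "odd_prod N = (\<Prod>t<N. 2 * int t + 1)"

lemma prod_lessThan_add:
  fixes f :: "nat \<Rightarrow> 'a::comm_monoid_mult"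
  shows "(\<Prod>t<a + b. f t) = (\<Prod>t<a. f t) * (\<Prod>t<b. f (a + t))"
proof -
  have "(\<Prod>t<a + b. f t) = prod f {0..<a} * prod f {a..<a + b}"
    using prod.atLeastLessThan_concat[of 0 a "a + b" f] by (simp add: atLeast0LessThan)
  also have "prod f {a..<a + b} = (\<Prod>t\<in>{0..<b}. f (t + a))"
    using prod.shift_bounds_nat_ivl[of f 0 a b] by (simp add: add.commute)
  finally show ?thesis by (simp add: atLeast0LessThan add.commute)
qed

lemma dfact_odd_eq_odd_prod: "int (dfact (2 * N - 1)) = odd_prod N"
proof -
  have odds: "{j \<in> {1..2 * N - 1}. even j = even (2 * N - 1)} = (\<lambda>t. 2 * t + 1) ` {..<N}"
  proof (cases "N = 0")
    case False
    show ?thesis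
    proof
      show "{j \<in> {1..2 * N - 1}. even j = even (2 * N - 1)} \<subseteq> (\<lambda>t. 2 * t + 1) ` {..<N}"
      proof
        fix j assume "j \<in> {j \<in> {1..2 * N - 1}. even j = even (2 * N - 1)}"
        then have j: "j \<le> 2 * N - 1" "odd j" using False by auto
        then obtain t where "j = 2 * t + 1" by (meson oddE)
        then show "j \<in> (\<lambda>t. 2 * t + 1) ` {..<N}" using j by auto
      qed
    qed (use False in auto)
  qed simp
  have "inj_on (\<lambda>t::nat. 2 * t + 1) {..<N}" by (auto simp: inj_on_def)
  then have "dfact (2 * N - 1) = (\<Prod>t<N. 2 * t + 1)"
    unfolding dfact_def odds by (simp add: prod.reindex)
  then show ?thesis by (simp add: odd_prod_def add.commute)
qed

lemma dvd_odd_prod: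
  assumes "k < N"
  shows "2 * int k + 1 dvd odd_prod N"
  unfolding odd_prod_def using assms by (intro dvd_prodI) auto

lemma odd_prod_mult_cong: "[odd_prod (L * m) = odd_prod L ^ m] (mod 2 * int L)"
proof (induction m)
  case 0
  then show ?case by (simp add: odd_prod_def)
next
  case (Suc m)
  have split: "odd_prod (L * Suc m) = odd_prod (L * m) * (\<Prod>t<L. 2 * int (L * m + t) + 1)"
    unfolding odd_prod_def using prod_lessThan_add[of "\<lambda>t. 2 * int t + 1" "L * m" L]
    by (simp add: add.commute)
  have "[(\<Prod>t<L. 2 * int (L * m + t) + 1) = odd_prod L] (mod 2 * int L)"
    unfolding odd_prod_def
  proof (rule cong_prod)
    fix t
    have "2 * int (L * m + t) + 1 = (2 * int t + 1) + 2 * int L * int m"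
      by (simp add: algebra_simps)
    then show "[2 * int (L * m + t) + 1 = 2 * int t + 1] (mod 2 * int L)"
      by (simp add: cong_iff_dvd_diff)
  qed
  from cong_mult[OF Suc.IH this] show ?case
    unfolding split by (simp add: mult.commute)
qed

lemma odd_prod_double_cong:
  assumes "even L"
  shows "[odd_prod (2 * L) = odd_prod L ^ 2] (mod 4 * int L)"
proof -
  \<comment> \<open>the second half of the factors, read backwards, is \<open>4L - (2t + 1)\<close> for \<open>t < L\<close>\<close>
  have "odd_prod (2 * L) = odd_prod L * (\<Prod>t<L. 2 * int (L + t) + 1)"
    unfolding odd_prod_def mult_2 by (rule prod_lessThan_add)
  also have "(\<Prod>t<L. 2 * int (L + t) + 1) = (\<Prod>t<L. 2 * int (L + (L - Suc t)) + 1)"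
    by (rule prod.nat_diff_reindex[symmetric])
  also have "\<dots> = (\<Prod>t<L. 4 * int L - (2 * int t + 1))"
    by (rule prod.cong) (auto simp: of_nat_diff)
  finally have split: "odd_prod (2 * L) = odd_prod L * (\<Prod>t<L. 4 * int L - (2 * int t + 1))" .
  have "[(\<Prod>t<L. 4 * int L - (2 * int t + 1)) = (\<Prod>t<L. - (2 * int t + 1))] (mod 4 * int L)"
    by (rule cong_prod) (simp add: cong_iff_dvd_diff)
  also have "(\<Prod>t<L. - (2 * int t + 1)) = (-1) ^ L * odd_prod L"
    unfolding odd_prod_def by (rule trans[OF prod_uminus]) simp
  also have "\<dots> = odd_prod L" using assms by simp
  finally show ?thesis
    unfolding split power2_eq_square by (rule cong_mult[OF cong_refl])
qed

lemma square_cong_one_two_pow: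
  fixes a :: int
  assumes "[a = 1] (mod 2 ^ (j + 1))"
  shows "[a ^ 2 = 1] (mod 2 ^ (j + 2))"
proof -
  obtain c where c: "a - 1 = 2 ^ (j + 1) * c"
    using assms by (auto simp: cong_iff_dvd_diff dvd_def)
  have "a ^ 2 - 1 = (a - 1) * (a - 1 + 2)" by (simp add: algebra_simps power2_eq_square)
  also have "\<dots> = 2 ^ (j + 2) * (c * (2 ^ j * c + 1))" unfolding c by (simp add: algebra_simps)
  finally show ?thesis by (simp add: cong_iff_dvd_diff)
qed

lemma odd_square_cong_one_mod_8:
  fixes a :: int
  assumes "odd a"
  shows "[a ^ 2 = 1] (mod 8)"
proof -
  obtain b where b: "a = 2 * b + 1" using assms oddE by blast
  have "even (b * (b + 1))" by simp
  then obtain c where "b * (b + 1) = 2 * c" by blast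
  then have "a ^ 2 - 1 = 8 * c" unfolding b by (simp add: algebra_simps power2_eq_square)
  then show ?thesis by (simp add: cong_iff_dvd_diff)
qed

lemma odd_power_two_pow_cong_one:
  fixes a :: int
  assumes "odd a"
  shows "[a ^ 2 ^ (j + 1) = 1] (mod 2 ^ (j + 3))"
proof (induction j)
  case 0
  show ?case using odd_square_cong_one_mod_8[OF assms] by simp
next
  case (Suc j)
  have "[(a ^ 2 ^ (j + 1)) ^ 2 = 1] (mod 2 ^ ((j + 2) + 2))"
    using square_cong_one_two_pow[of _ "j + 2"] Suc.IH by (simp add: numeral_3_eq_3)
  moreover have "(a ^ 2 ^ (j + 1)) ^ 2 = a ^ 2 ^ (Suc j + 1)"
    by (simp flip: power_mult)
  ultimately show ?case by (simp add: numeral_3_eq_3)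
qed

lemma odd_prod_two_pow_cong_one: "[odd_prod (2 ^ (j + 2)) = 1] (mod 2 ^ (j + 3))"
proof (induction j)
  case 0
  show ?case by (simp add: odd_prod_def numeral_eq_Suc lessThan_Suc cong_def)
next
  case (Suc j)
  have "[odd_prod (2 * 2 ^ (j + 2)) = odd_prod (2 ^ (j + 2)) ^ 2] (mod 2 ^ ((j + 2) + 2))"
    using odd_prod_double_cong[of "2 ^ (j + 2)"] by simp
  also have "[odd_prod (2 ^ (j + 2)) ^ 2 = 1] (mod 2 ^ ((j + 2) + 2))"
    using square_cong_one_two_pow[of _ "j + 2"] Suc.IH by (simp add: numeral_3_eq_3)
  finally show ?case by (simp add: numeral_3_eq_3)
qed

lemma odd_prod_power_cong_odd_power:
  assumes "odd m"
  shows "[odd_prod (2 ^ (j + 2)) ^ m = int m ^ 2 ^ (j + 1)] (mod 2 ^ (j + 3))"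
proof -
  have "[odd_prod (2 ^ (j + 2)) ^ m = 1 ^ m] (mod 2 ^ (j + 3))"
    by (rule cong_pow) (rule odd_prod_two_pow_cong_one)
  also have "[1 ^ m = int m ^ 2 ^ (j + 1)] (mod 2 ^ (j + 3))"
    using odd_power_two_pow_cong_one[of "int m" j] assms by (simp add: cong_sym)
  finally show ?thesis .
qed

lemma three_power_odd_cong: "odd m \<Longrightarrow> [3 ^ m = - (int m ^ 2)] (mod 4)"
proof -
  assume "odd m"
  have "[(3::int) ^ m = (-1) ^ m] (mod 4)" by (rule cong_pow) (simp add: cong_def)
  also have "(-1::int) ^ m = -1" using \<open>odd m\<close> by simp
  also have "[-1 = - (int m ^ 2)] (mod 4)"
    using cong_dvd_modulus[OF odd_square_cong_one_mod_8[of "int m"], of 4] \<open>odd m\<close>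
    by (simp add: cong_sym cong_minus_minus_iff)
  finally show ?thesis .
qed

lemma cong_mult_coprime_if_dvd:
  fixes x y a b :: int
  assumes "[x = y] (mod a)" and "b dvd x" and "b dvd y" and "coprime a b"
  shows "[x = y] (mod a * b)"
proof -
  have "[x = y] (mod b)" using assms(2,3) by (simp add: cong_iff_dvd_diff)
  with assms(1,4) show ?thesis by (simp add: coprime_cong_mult)
qed

lemma dfact_cong_via_two_pow:
  assumes "odd m" and "i \<ge> 1" and "int m dvd y"
    and "[odd_prod (2 ^ (i - 1)) ^ m = y] (mod 2 ^ i)"
  shows "[int (dfact (2 ^ i * m - 1)) = y] (mod int (2 ^ i * m))"
proof -
  define L :: nat where "L = 2 ^ (i - 1)"
  have two_L: "2 * L = 2 ^ i" using \<open>i \<ge> 1\<close> unfolding L_def by (simp flip: power_Suc)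
  then have two_L_int: "2 * int L = 2 ^ i" by (metis of_nat_mult of_nat_numeral of_nat_power)
  have dfact: "int (dfact (2 ^ i * m - 1)) = odd_prod (L * m)"
    using dfact_odd_eq_odd_prod[of "L * m"] by (simp add: two_L[symmetric] mult.assoc)
  have "[odd_prod (L * m) = odd_prod L ^ m] (mod 2 ^ i)"
    using odd_prod_mult_cong[of L m] by (simp only: two_L_int)
  also have "[odd_prod L ^ m = y] (mod 2 ^ i)" using assms(4) by (simp only: L_def)
  finally have cong: "[odd_prod (L * m) = y] (mod 2 ^ i)" .
  have dvd: "int m dvd odd_prod (L * m)"
  proof -
    obtain k where m: "m = 2 * k + 1" using \<open>odd m\<close> oddE by blast
    then have "k < m" by simp
    also have "m \<le> L * m" by (simp add: L_def)
    finally show ?thesis using dvd_odd_prod[of k "L * m"] m by (simp add: add.commute)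
  qed
  have "coprime ((2::int) ^ i) (int m)" using \<open>odd m\<close> by simp
  from cong_mult_coprime_if_dvd[OF cong dvd assms(3) this] show ?thesis
    using dfact by simp
qed

theorem theorem14:
  fixes n i k :: nat
  assumes "n = 2 ^ i * (2 * k + 1)" and "i \<ge> 1"
  shows "(i = 1 \<longrightarrow> [int (dfact (n - 1)) = int (2 * k + 1)] (mod int n))
       \<and> (i = 2 \<longrightarrow> [int (dfact (n - 1)) = - (int (2 * k + 1) ^ 2)] (mod int n))
       \<and> (i > 2 \<longrightarrow> [int (dfact (n - 1)) = int (2 * k + 1) ^ (2 ^ (i - 2))] (mod int n))"
proof (intro conjI impI)
  define m where "m = 2 * k + 1"
  have "odd m" unfolding m_def by simp
  have n: "n = 2 ^ i * m" unfolding m_def by (rule assms(1))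
  note dfact_cong = dfact_cong_via_two_pow[OF \<open>odd m\<close> \<open>i \<ge> 1\<close>, folded n]
  show "[int (dfact (n - 1)) = int m] (mod int n)" if "i = 1"
  proof (rule dfact_cong)
    have "odd_prod 1 = 1" by (simp add: odd_prod_def)
    then show "[odd_prod (2 ^ (i - 1)) ^ m = int m] (mod 2 ^ i)"
      using \<open>i = 1\<close> \<open>odd m\<close> by (simp add: cong_iff_dvd_diff)
  qed simp
  show "[int (dfact (n - 1)) = - (int m ^ 2)] (mod int n)" if "i = 2"
  proof (rule dfact_cong)
    have "odd_prod 2 = 3" by (simp add: odd_prod_def numeral_2_eq_2)
    then show "[odd_prod (2 ^ (i - 1)) ^ m = - (int m ^ 2)] (mod 2 ^ i)"
      using \<open>i = 2\<close> three_power_odd_cong[OF \<open>odd m\<close>] by simp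
  qed simp
  show "[int (dfact (n - 1)) = int m ^ 2 ^ (i - 2)] (mod int n)" if "i > 2"
  proof (rule dfact_cong)
    define j where "j = i - 3"
    have i: "i = j + 3" using \<open>i > 2\<close> by (simp add: j_def)
    show "[odd_prod (2 ^ (i - 1)) ^ m = int m ^ 2 ^ (i - 2)] (mod 2 ^ i)"
      using odd_prod_power_cong_odd_power[OF \<open>odd m\<close>, of j] unfolding i by simp
  qed (simp add: \<open>i > 2\<close>)
qed

end
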